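(* (1) The family $\mathcal{FF}=(\mathcal{FF}(n))_{n\ge1}$ of formal fractions, with the compositions $\circ_i$ defined below, is a (non-symmetric) set-operad, with unit $\frac{1}{[1]}\in\mathcal{FF}(1)$. (2) The map $\phi^0$ which sends each symbol $[S]$ to $\sum_{j\in S}u_j$ (and hence a formal fraction to the corresponding rational fraction) is an injective morphism of set-operads from $\mathcal{FF}$ to the set-operad underlying $\mathrm{Mould}_0$. (3) The map $\phi^1$ which sends each symbol $[S]$ to $\bigl(\prod_{j\in S}u_j\bigr)-1$ (and hence a formal fraction to the corresponding rational fraction) is an injective morphism of set-operads from $\mathcal{FF}$ to the set-operad underlying $\mathrm{Mould}_1$.
   Context: Formal fractions: for $n\ge1$, $\mathcal{FF}(n)$ is the set of formal fractions whose numerator and denominator are (commutative) products of formal symbols $[S]$, where $S$ ranges over non-empty subsets of $\{1,\dots,n\}$. Fractions are reduced, i.e. a symbol occurring in both numerator and denominator is cancelled; equivalently $\mathcal{FF}(n)$ is the free abelian group, written multiplicatively, on the symbols $[S]$. The empty product is written $1$. For $F\in\mathcal{FF}(m)$ and sets $A_1,\dots,A_m$ of positive integers, $F(A_1,\dots,A_m)$ denotes the fraction obtained by replacing each symbol $[S]$ by $[\bigcup_{k\in S}A_k]$ (a single integer $a$ stands for $\{a\}$). For $F\in\mathcal{FF}(m)$, $G\in\mathcal{FF}(n)$ and $1\le i\le m$, put $S_{i,n}=\{i,i+1,\dots,i+n-1\}$ and $$F\circ_i G=[S_{i,n}]\;F(1,\dots,i-1,S_{i,n},i+n,\dots,m+n-1)\;G(i,i+1,\dots,i+n-1)\in\mathcal{FF}(m+n-1).$$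 $\mathrm{Mould}_0$ is the operad with $\mathrm{Mould}_0(n)=\mathbb{Q}(u_1,\dots,u_n)$ and composition, for $F\in\mathrm{Mould}_0(m)$, $G\in\mathrm{Mould}_0(n)$, $F\circ_i G=\Sigma_{i,n}\,F(u_1,\dots,u_{i-1},\Sigma_{i,n},u_{i+n},\dots,u_{m+n-1})\,G(u_i,\dots,u_{i+n-1})$ with $\Sigma_{i,n}=u_i+\dots+u_{i+n-1}$. $\mathrm{Mould}_1$ is the operad on the same spaces with composition $F\circ_i G=(\Pi_{i,n}-1)\,F(u_1,\dots,u_{i-1},\Pi_{i,n},u_{i+n},\dots,u_{m+n-1})\,G(u_i,\dots,u_{i+n-1})$ with $\Pi_{i,n}=u_iu_{i+1}\cdots u_{i+n-1}$. The underlying set-operad of an operad of vector spaces is obtained by forgetting the linear structure. *)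

theory Defs
  imports Complex_Main "HOL-Library.Poly_Mapping" "HOL-Computational_Algebra.Fraction_Field"
begin

text \<open>A formal fraction is an element of the free abelian group (written additively
  here, multiplicatively in the paper) on symbols [S], S a set of positive integers.
  The symbol [S] is frag_of S; the empty product 1 is 0; product is +; inverse is uminus.\<close>

type_synonym formal_fraction = "nat set \<Rightarrow>\<^sub>0 int"

definition FF :: "nat \<Rightarrow> formal_fraction set" where
  "FF n = {F. Poly_Mapping.keys F \<subseteq> {S. S \<noteq> {} \<and> S \<subseteq> {1..n}}}"

definition ff_subst :: "(nat \<Rightarrow> nat set) \<Rightarrow> formal_fraction \<Rightarrow> formal_fraction" where
  "ff_subst A F = frag_extend (\<lambda>S. frag_of (\<Union>k\<in>S. A k)) F"

definition Sblock :: "nat \<Rightarrow> nat \<Rightarrow> nat set" where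
  "Sblock i n = {i..<i+n}"

definition ff_comp :: "formal_fraction \<Rightarrow> nat \<Rightarrow> nat \<Rightarrow> formal_fraction \<Rightarrow> formal_fraction" where
  "ff_comp F i n G =
     frag_of (Sblock i n)
     + ff_subst (\<lambda>k. if k < i then {k} else if k = i then Sblock i n else {k + n - 1}) F
     + ff_subst (\<lambda>k. {k + i - 1}) G"

definition ff_unit :: formal_fraction where
  "ff_unit = - frag_of {1}"

text \<open>Multivariate polynomials over Q in variables u_1,u_2,... (monomials are finitely
  supported exponent maps) and their fraction field.\<close>
type_synonym mpoly = "(nat \<Rightarrow>\<^sub>0 nat) \<Rightarrow>\<^sub>0 rat"
type_synonym ratfun = "mpoly fract"

definition pvar :: "nat \<Rightarrow> mpoly" where
  "pvar j = Poly_Mapping.single (Poly_Mapping.single j 1) 1"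

definition pvars :: "mpoly \<Rightarrow> nat set" where
  "pvars p = (\<Union>m\<in>Poly_Mapping.keys p. Poly_Mapping.keys m)"

definition u :: "nat \<Rightarrow> ratfun" where
  "u j = Fract (pvar j) 1"

text \<open>Mould(n) = Q(u_1,...,u_n), as a subfield of Q(u_1,u_2,...).\<close>
definition Mould :: "nat \<Rightarrow> ratfun set" where
  "Mould n = {Fract p q | p q. q \<noteq> 0 \<and> pvars p \<subseteq> {1..n} \<and> pvars q \<subseteq> {1..n}}"

definition psubst :: "(nat \<Rightarrow> mpoly) \<Rightarrow> mpoly \<Rightarrow> mpoly" where
  "psubst \<sigma> p = (\<Sum>m\<in>Poly_Mapping.keys p.
      Poly_Mapping.single 0 (Poly_Mapping.lookup p m) *
      (\<Prod>j\<in>Poly_Mapping.keys m. \<sigma> j ^ Poly_Mapping.lookup m j))"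

text \<open>Substitution into a rational fraction p/q (well defined for the injective
  substitutions used below).\<close>
definition rsubst :: "(nat \<Rightarrow> mpoly) \<Rightarrow> ratfun \<Rightarrow> ratfun" where
  "rsubst \<sigma> x = (SOME y. \<exists>p q. q \<noteq> 0 \<and> x = Fract p q \<and> y = Fract (psubst \<sigma> p) (psubst \<sigma> q))"

definition Sigma_poly :: "nat \<Rightarrow> nat \<Rightarrow> mpoly" where
  "Sigma_poly i n = (\<Sum>j\<in>Sblock i n. pvar j)"

definition Pi_poly :: "nat \<Rightarrow> nat \<Rightarrow> mpoly" where
  "Pi_poly i n = (\<Prod>j\<in>Sblock i n. pvar j)"

definition outer_subst :: "nat \<Rightarrow> nat \<Rightarrow> mpoly \<Rightarrow> nat \<Rightarrow> mpoly" where
  "outer_subst i n X = (\<lambda>k. if k < i then pvar k else if k = i then X else pvar (k + n - 1))"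

definition inner_subst :: "nat \<Rightarrow> nat \<Rightarrow> mpoly" where
  "inner_subst i = (\<lambda>k. pvar (k + i - 1))"

definition mould0_comp :: "ratfun \<Rightarrow> nat \<Rightarrow> nat \<Rightarrow> ratfun \<Rightarrow> ratfun" where
  "mould0_comp F i n G =
     Fract (Sigma_poly i n) 1 * rsubst (outer_subst i n (Sigma_poly i n)) F
       * rsubst (inner_subst i) G"

definition mould1_comp :: "ratfun \<Rightarrow> nat \<Rightarrow> nat \<Rightarrow> ratfun \<Rightarrow> ratfun" where
  "mould1_comp F i n G =
     (Fract (Pi_poly i n) 1 - 1) * rsubst (outer_subst i n (Pi_poly i n)) F
       * rsubst (inner_subst i) G"

definition phi0 :: "formal_fraction \<Rightarrow> ratfun" where
  "phi0 F = (\<Prod>S\<in>Poly_Mapping.keys F. (\<Sum>j\<in>S. u j) powi Poly_Mapping.lookup F S)"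

definition phi1 :: "formal_fraction \<Rightarrow> ratfun" where
  "phi1 F = (\<Prod>S\<in>Poly_Mapping.keys F. ((\<Prod>j\<in>S. u j) - 1) powi Poly_Mapping.lookup F S)"

text \<open>P n is the set of operations of arity n, cmp x i n y = x o_i y for y of arity n.\<close>
definition is_ns_set_operad ::
  "(nat \<Rightarrow> 'a set) \<Rightarrow> ('a \<Rightarrow> nat \<Rightarrow> nat \<Rightarrow> 'a \<Rightarrow> 'a) \<Rightarrow> 'a \<Rightarrow> bool" where
  "is_ns_set_operad P cmp e \<longleftrightarrow>
     e \<in> P 1 \<and>
     (\<forall>m n x y i. 1 \<le> m \<longrightarrow> 1 \<le> n \<longrightarrow> x \<in> P m \<longrightarrow> y \<in> P n \<longrightarrow> 1 \<le> i \<longrightarrow> i \<le> m \<longrightarrow>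
        cmp x i n y \<in> P (m + n - 1)) \<and>
     (\<forall>n x. 1 \<le> n \<longrightarrow> x \<in> P n \<longrightarrow> cmp e 1 n x = x) \<and>
     (\<forall>m x i. 1 \<le> m \<longrightarrow> x \<in> P m \<longrightarrow> 1 \<le> i \<longrightarrow> i \<le> m \<longrightarrow> cmp x i 1 e = x) \<and>
     (\<forall>m n p x y z i j. 1 \<le> m \<longrightarrow> 1 \<le> n \<longrightarrow> 1 \<le> p \<longrightarrow>
        x \<in> P m \<longrightarrow> y \<in> P n \<longrightarrow> z \<in> P p \<longrightarrow>
        1 \<le> i \<longrightarrow> i \<le> m \<longrightarrow> 1 \<le> j \<longrightarrow> j \<le> n \<longrightarrow>
        cmp (cmp x i n y) (i + j - 1) p z = cmp x i (n + p - 1) (cmp y j p z)) \<and>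
     (\<forall>m n p x y z i j. 1 \<le> m \<longrightarrow> 1 \<le> n \<longrightarrow> 1 \<le> p \<longrightarrow>
        x \<in> P m \<longrightarrow> y \<in> P n \<longrightarrow> z \<in> P p \<longrightarrow>
        1 \<le> i \<longrightarrow> i < j \<longrightarrow> j \<le> m \<longrightarrow>
        cmp (cmp x i n y) (j + n - 1) p z = cmp (cmp x j p z) i n y)"

definition is_operad_morphism ::
  "(nat \<Rightarrow> 'a set) \<Rightarrow> ('a \<Rightarrow> nat \<Rightarrow> nat \<Rightarrow> 'a \<Rightarrow> 'a) \<Rightarrow> 'a \<Rightarrow>
   (nat \<Rightarrow> 'b set) \<Rightarrow> ('b \<Rightarrow> nat \<Rightarrow> nat \<Rightarrow> 'b \<Rightarrow> 'b) \<Rightarrow> 'b \<Rightarrow> ('a \<Rightarrow> 'b) \<Rightarrow> bool" where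
  "is_operad_morphism P compP eP Q compQ eQ f \<longleftrightarrow>
     (\<forall>n x. 1 \<le> n \<longrightarrow> x \<in> P n \<longrightarrow> f x \<in> Q n) \<and>
     f eP = eQ \<and>
     (\<forall>m n x y i. 1 \<le> m \<longrightarrow> 1 \<le> n \<longrightarrow> x \<in> P m \<longrightarrow> y \<in> P n \<longrightarrow> 1 \<le> i \<longrightarrow> i \<le> m \<longrightarrow>
        f (compP x i n y) = compQ (f x) i n (f y))"

end

theory Submission
  imports Defs "HOL-Computational_Algebra.Polynomial"
begin

text \<open>Substituting blocks of indices for the symbols of a formal fraction is an endomorphism
  of the free abelian group on the symbols, and substitutions compose like the underlying maps
  on indices; the operad axioms for formal fractions thus reduce to identities between such
  index maps. The maps \<open>\<phi>\<^sup>0\<close> and \<open>\<phi>\<^sup>1\<close> are the group homomorphisms into the multiplicative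
  group of rational fractions determined by the value of a symbol \<open>[S]\<close>; both values turn a
  union of disjoint blocks into the correspondingly substituted polynomial, so \<open>\<phi>\<close> intertwines
  substitution of blocks with substitution of variables.

  For injectivity, suppose \<open>\<phi>(H) = 1\<close> with \<open>H \<noteq> 1\<close> and let \<open>[S\<^sub>0]\<close> be a symbol of \<open>H\<close> such
  that no other symbol \<open>[S]\<close> of \<open>H\<close> has \<open>S \<subseteq> S\<^sub>0\<close>. Specialising \<open>u\<^sub>j\<close> to \<open>X\<close> for \<open>j \<in> S\<^sub>0\<close> and
  to a constant otherwise (1 for \<open>\<phi>\<^sup>0\<close>, 2 for \<open>\<phi>\<^sup>1\<close>) gives univariate polynomials in which the
  image of \<open>[S\<^sub>0]\<close> has a simple root at 0 (resp. 1) that the images of the other symbols of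
  \<open>H\<close> do not share; comparing the multiplicities of this root in numerator and denominator
  shows that \<open>[S\<^sub>0]\<close> has exponent 0 in \<open>H\<close>.\<close>

lemma ff_subst_add [simp]: "ff_subst A (F + G) = ff_subst A F + ff_subst A G"
  by (simp add: ff_subst_def frag_extend_add)

lemma ff_subst_minus [simp]: "ff_subst A (- F) = - ff_subst A F"
  by (simp add: ff_subst_def frag_extend_minus)

lemma ff_subst_diff [simp]: "ff_subst A (F - G) = ff_subst A F - ff_subst A G"
  by (simp add: ff_subst_def frag_extend_diff)

lemma ff_subst_zero [simp]: "ff_subst A 0 = 0"
  by (simp add: ff_subst_def)

lemma ff_subst_frag_of [simp]: "ff_subst A (frag_of S) = frag_of (\<Union>k\<in>S. A k)"
  by (simp add: ff_subst_def)

lemma ff_subst_ff_subst: "ff_subst A (ff_subst B F) = ff_subst (\<lambda>k. \<Union>l\<in>B k. A l) F"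
proof -
  have "ff_subst A (ff_subst B F) = frag_extend ((\<lambda>S. frag_of (\<Union>k\<in>S. A k)) \<circ> (\<lambda>S. \<Union>k\<in>S. B k)) F"
    unfolding ff_subst_def using frag_extend_compose[of "\<lambda>S. frag_of (\<Union>k\<in>S. A k)" "\<lambda>S. \<Union>k\<in>S. B k" F]
    by (simp add: o_def)
  also have "\<dots> = ff_subst (\<lambda>k. \<Union>l\<in>B k. A l) F"
    unfolding ff_subst_def o_def by (rule frag_extend_eq) auto
  finally show ?thesis .
qed

lemma ff_subst_cong:
  "(\<And>S k. S \<in> Poly_Mapping.keys F \<Longrightarrow> k \<in> S \<Longrightarrow> A k = B k) \<Longrightarrow> ff_subst A F = ff_subst B F"
  unfolding ff_subst_def by (rule frag_extend_eq) auto

lemma ff_subst_singleton: "ff_subst (\<lambda>k. {k}) F = F"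
  unfolding ff_subst_def by (simp add: frag_expansion[symmetric])

lemma ff_subst_eq_self: "(\<And>k. A k = {k}) \<Longrightarrow> ff_subst A F = F"
  using ff_subst_singleton by (metis ext)

lemma keys_ff_subst: "Poly_Mapping.keys (ff_subst A F) \<subseteq> (\<lambda>S. \<Union>k\<in>S. A k) ` Poly_Mapping.keys F"
  unfolding ff_subst_def by (rule order_trans[OF keys_frag_extend]) auto

section \<open>The operad of formal fractions\<close>

lemma index_bounds_FF: "F \<in> FF n \<Longrightarrow> S \<in> Poly_Mapping.keys F \<Longrightarrow> k \<in> S \<Longrightarrow> 1 \<le> k \<and> k \<le> n"
  unfolding FF_def by force

lemma frag_of_in_FF: "S \<noteq> {} \<Longrightarrow> S \<subseteq> {1..n} \<Longrightarrow> frag_of S \<in> FF n"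
  by (simp add: FF_def)

lemma add_in_FF: "F \<in> FF n \<Longrightarrow> G \<in> FF n \<Longrightarrow> F + G \<in> FF n"
  using keys_add[of F G] by (auto simp: FF_def)

lemma ff_subst_in_FF:
  assumes F: "F \<in> FF m" and A: "\<And>k. 1 \<le> k \<Longrightarrow> k \<le> m \<Longrightarrow> A k \<noteq> {} \<and> A k \<subseteq> {1..n}"
  shows "ff_subst A F \<in> FF n"
proof -
  have "(\<Union>k\<in>S. A k) \<noteq> {} \<and> (\<Union>k\<in>S. A k) \<subseteq> {1..n}" if "S \<in> Poly_Mapping.keys F" for S
  proof -
    from F that have "S \<noteq> {}" "S \<subseteq> {1..m}" by (auto simp: FF_def)
    with A show ?thesis by (auto simp: subset_iff)
  qed
  then show ?thesis
    using keys_ff_subst[of A F] unfolding FF_def by blast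
qed

definition outer_blocks :: "nat \<Rightarrow> nat \<Rightarrow> nat \<Rightarrow> nat set" where
  "outer_blocks i n k = (if k < i then {k} else if k = i then Sblock i n else {k + n - 1})"

definition inner_blocks :: "nat \<Rightarrow> nat \<Rightarrow> nat set" where
  "inner_blocks i k = {k + i - 1}"

lemma ff_comp_eq:
  "ff_comp F i n G = frag_of (Sblock i n) + ff_subst (outer_blocks i n) F + ff_subst (inner_blocks i) G"
  unfolding ff_comp_def outer_blocks_def[abs_def] inner_blocks_def[abs_def] ..

lemma ff_comp_in_FF:
  assumes "1 \<le> n" "x \<in> FF m" "y \<in> FF n" "1 \<le> i" "i \<le> m"
  shows "ff_comp x i n y \<in> FF (m + n - 1)"
  unfolding ff_comp_eq
proof (intro add_in_FF)
  show "frag_of (Sblock i n) \<in> FF (m + n - 1)"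
    by (rule frag_of_in_FF) (use assms in \<open>auto simp: Sblock_def\<close>)
  show "ff_subst (outer_blocks i n) x \<in> FF (m + n - 1)"
    by (rule ff_subst_in_FF[OF assms(2)]) (use assms in \<open>auto simp: outer_blocks_def Sblock_def\<close>)
  show "ff_subst (inner_blocks i) y \<in> FF (m + n - 1)"
    by (rule ff_subst_in_FF[OF assms(3)]) (use assms in \<open>auto simp: inner_blocks_def\<close>)
qed

lemma ff_comp_unit_left: "ff_comp ff_unit 1 n x = x"
proof -
  have "ff_subst (inner_blocks 1) x = x"
    by (rule ff_subst_eq_self) (simp add: inner_blocks_def)
  then show ?thesis
    by (simp add: ff_comp_eq ff_unit_def outer_blocks_def)
qed

lemma ff_comp_unit_right: "ff_comp x i 1 ff_unit = x"
proof -
  have "ff_subst (outer_blocks i 1) x = x"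
    by (rule ff_subst_eq_self) (simp add: outer_blocks_def Sblock_def)
  then show ?thesis
    by (simp add: ff_comp_eq ff_unit_def inner_blocks_def Sblock_def)
qed

lemma UN_outer_blocks_nested:
  assumes "1 \<le> j" "j \<le> n" "1 \<le> p"
  shows "(\<Union>l\<in>Sblock i n. outer_blocks (i + j - 1) p l) = Sblock i (n + p - 1)"
proof (rule set_eqI, rule iffI)
  fix t assume "t \<in> (\<Union>l\<in>Sblock i n. outer_blocks (i + j - 1) p l)"
  then show "t \<in> Sblock i (n + p - 1)"
    using assms by (auto simp: outer_blocks_def Sblock_def split: if_splits)
next
  fix t assume t: "t \<in> Sblock i (n + p - 1)"
  consider "t < i + j - 1" | "i + j - 1 \<le> t" "t < i + j - 1 + p" | "i + j - 1 + p \<le> t"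
    by linarith
  then show "t \<in> (\<Union>l\<in>Sblock i n. outer_blocks (i + j - 1) p l)"
  proof cases
    case 1 then show ?thesis
      using t assms by (auto simp: outer_blocks_def Sblock_def intro!: bexI[where x = t])
  next
    case 2 then show ?thesis
      using t assms by (auto simp: outer_blocks_def Sblock_def intro!: bexI[where x = "i + j - 1"])
  next
    case 3 then show ?thesis
      using t assms by (auto simp: outer_blocks_def Sblock_def intro!: bexI[where x = "t + 1 - p"])
  qed
qed

lemma UN_inner_blocks:
  assumes "1 \<le> i"
  shows "(\<Union>l\<in>Sblock j p. inner_blocks i l) = Sblock (i + j - 1) p"
proof (rule set_eqI, rule iffI)
  fix t assume "t \<in> (\<Union>l\<in>Sblock j p. inner_blocks i l)"
  then show "t \<in> Sblock (i + j - 1) p"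
    using assms by (auto simp: inner_blocks_def Sblock_def)
next
  fix t assume "t \<in> Sblock (i + j - 1) p"
  then show "t \<in> (\<Union>l\<in>Sblock j p. inner_blocks i l)"
    using assms by (auto simp: inner_blocks_def Sblock_def intro!: bexI[where x = "t + 1 - i"])
qed

lemma UN_outer_blocks_before: "i < j \<Longrightarrow> (\<Union>l\<in>Sblock i n. outer_blocks (j + n - 1) p l) = Sblock i n"
  by (auto simp: outer_blocks_def Sblock_def split: if_splits)

lemma UN_outer_blocks_after:
  assumes "i < j" "1 \<le> n"
  shows "(\<Union>l\<in>Sblock j p. outer_blocks i n l) = Sblock (j + n - 1) p"
proof (rule set_eqI, rule iffI)
  fix t assume "t \<in> (\<Union>l\<in>Sblock j p. outer_blocks i n l)"
  then show "t \<in> Sblock (j + n - 1) p"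
    using assms by (auto simp: outer_blocks_def Sblock_def split: if_splits)
next
  fix t assume "t \<in> Sblock (j + n - 1) p"
  then show "t \<in> (\<Union>l\<in>Sblock j p. outer_blocks i n l)"
    using assms by (auto simp: outer_blocks_def Sblock_def intro!: bexI[where x = "t + 1 - n"])
qed

lemma outer_blocks_nested:
  assumes "1 \<le> j" "j \<le> n" "1 \<le> p"
  shows "(\<Union>l\<in>outer_blocks i n k. outer_blocks (i + j - 1) p l) = outer_blocks i (n + p - 1) k"
  using assms UN_outer_blocks_nested[OF assms]
  by (cases rule: linorder_cases[of k i]) (auto simp: outer_blocks_def)

lemma inner_outer_blocks_nested:
  assumes "1 \<le> i"
  shows "(\<Union>l\<in>inner_blocks i k. outer_blocks (i + j - 1) p l) = (\<Union>l\<in>outer_blocks j p k. inner_blocks i l)"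
  using assms UN_inner_blocks[OF assms, of j p]
  by (cases rule: linorder_cases[of k j]) (auto simp: outer_blocks_def inner_blocks_def add.commute)

lemma inner_blocks_nested:
  "1 \<le> i \<Longrightarrow> 1 \<le> j \<Longrightarrow> (\<Union>l\<in>inner_blocks j k. inner_blocks i l) = inner_blocks (i + j - 1) k"
  by (simp add: inner_blocks_def)

lemma outer_blocks_parallel:
  assumes "i < j" "1 \<le> n"
  shows "(\<Union>l\<in>outer_blocks i n k. outer_blocks (j + n - 1) p l) = (\<Union>l\<in>outer_blocks j p k. outer_blocks i n l)"
proof -
  consider "k < i" | "k = i" | "i < k" "k < j" | "k = j" | "j < k"
    by linarith
  then show ?thesis
  proof cases
    case 2
    moreover have "outer_blocks i n i = Sblock i n" "outer_blocks j p i = {i}"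
      using assms by (simp_all add: outer_blocks_def)
    ultimately show ?thesis using UN_outer_blocks_before[OF assms(1)] by simp
  next
    case 4
    moreover have "outer_blocks i n j = {j + n - 1}" "outer_blocks j p j = Sblock j p"
      "outer_blocks (j + n - 1) p (j + n - 1) = Sblock (j + n - 1) p"
      using assms by (simp_all add: outer_blocks_def)
    ultimately show ?thesis using UN_outer_blocks_after[OF assms] by simp
  qed (use assms in \<open>simp_all add: outer_blocks_def\<close>)
qed

lemma ff_comp_assoc_nested:
  assumes "1 \<le> i" "1 \<le> j" "j \<le> n" "1 \<le> p"
  shows "ff_comp (ff_comp x i n y) (i + j - 1) p z = ff_comp x i (n + p - 1) (ff_comp y j p z)"
proof -
  have x: "(\<lambda>k. \<Union>l\<in>outer_blocks i n k. outer_blocks (i + j - 1) p l) = outer_blocks i (n + p - 1)"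
    by (rule ext) (rule outer_blocks_nested[OF assms(2-4)])
  have y: "(\<lambda>k. \<Union>l\<in>inner_blocks i k. outer_blocks (i + j - 1) p l)
      = (\<lambda>k. \<Union>l\<in>outer_blocks j p k. inner_blocks i l)"
    by (rule ext) (rule inner_outer_blocks_nested[OF assms(1)])
  have z: "(\<lambda>k. \<Union>l\<in>inner_blocks j k. inner_blocks i l) = inner_blocks (i + j - 1)"
    by (rule ext) (rule inner_blocks_nested[OF assms(1,2)])
  show ?thesis
    unfolding ff_comp_eq ff_subst_add ff_subst_frag_of ff_subst_ff_subst x y z
      UN_outer_blocks_nested[OF assms(2-4)] UN_inner_blocks[OF assms(1)]
    by (simp add: ac_simps)
qed

lemma ff_comp_assoc_parallel:
  assumes "y \<in> FF n" "z \<in> FF p" "i < j" "1 \<le> n"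
  shows "ff_comp (ff_comp x i n y) (j + n - 1) p z = ff_comp (ff_comp x j p z) i n y"
proof -
  have x: "(\<lambda>k. \<Union>l\<in>outer_blocks i n k. outer_blocks (j + n - 1) p l)
      = (\<lambda>k. \<Union>l\<in>outer_blocks j p k. outer_blocks i n l)"
    by (rule ext) (rule outer_blocks_parallel[OF assms(3,4)])
  have y: "ff_subst (\<lambda>k. \<Union>l\<in>inner_blocks i k. outer_blocks (j + n - 1) p l) y = ff_subst (inner_blocks i) y"
  proof (rule ff_subst_cong)
    fix S k assume "S \<in> Poly_Mapping.keys y" "k \<in> S"
    with index_bounds_FF[OF assms(1)] have "k \<le> n" by blast
    with assms show "(\<Union>l\<in>inner_blocks i k. outer_blocks (j + n - 1) p l) = inner_blocks i k"
      by (simp add: outer_blocks_def inner_blocks_def)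
  qed
  have z: "ff_subst (inner_blocks (j + n - 1)) z = ff_subst (\<lambda>k. \<Union>l\<in>inner_blocks j k. outer_blocks i n l) z"
  proof (rule ff_subst_cong)
    fix S k assume "S \<in> Poly_Mapping.keys z" "k \<in> S"
    with index_bounds_FF[OF assms(2)] have "1 \<le> k" by blast
    with assms show "inner_blocks (j + n - 1) k = (\<Union>l\<in>inner_blocks j k. outer_blocks i n l)"
      by (simp add: outer_blocks_def inner_blocks_def)
  qed
  show ?thesis
    unfolding ff_comp_eq ff_subst_add ff_subst_frag_of ff_subst_ff_subst x y z
      UN_outer_blocks_before[OF assms(3)] UN_outer_blocks_after[OF assms(3,4)]
    by (simp add: ac_simps)
qed

theorem ns_set_operad_FF: "is_ns_set_operad FF ff_comp ff_unit"
  unfolding is_ns_set_operad_def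
  using ff_comp_in_FF ff_comp_unit_left ff_comp_unit_right ff_comp_assoc_nested ff_comp_assoc_parallel
  by (auto simp: FF_def ff_unit_def)

lemma sum_single_lookup: "(\<Sum>a\<in>Poly_Mapping.keys p. Poly_Mapping.single a (Poly_Mapping.lookup p a)) = p"
  by (rule poly_mapping_eqI) (simp add: lookup_sum lookup_single when_def in_keys_iff)

definition monomial_eval :: "(nat \<Rightarrow> 'a::comm_semiring_1) \<Rightarrow> (nat \<Rightarrow>\<^sub>0 nat) \<Rightarrow> 'a" where
  "monomial_eval \<sigma> m = (\<Prod>j\<in>Poly_Mapping.keys m. \<sigma> j ^ Poly_Mapping.lookup m j)"

definition mpoly_eval :: "(rat \<Rightarrow> 'a::comm_ring_1) \<Rightarrow> (nat \<Rightarrow> 'a) \<Rightarrow> mpoly \<Rightarrow> 'a" where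
  "mpoly_eval \<kappa> \<sigma> p = (\<Sum>m\<in>Poly_Mapping.keys p. \<kappa> (Poly_Mapping.lookup p m) * monomial_eval \<sigma> m)"

lemma monomial_eval_superset:
  "finite K \<Longrightarrow> Poly_Mapping.keys m \<subseteq> K \<Longrightarrow> monomial_eval \<sigma> m = (\<Prod>j\<in>K. \<sigma> j ^ Poly_Mapping.lookup m j)"
  unfolding monomial_eval_def by (rule prod.mono_neutral_left) (auto simp: in_keys_iff)

lemma monomial_eval_zero [simp]: "monomial_eval \<sigma> 0 = 1"
  by (simp add: monomial_eval_def)

lemma monomial_eval_single: "monomial_eval \<sigma> (Poly_Mapping.single j e) = \<sigma> j ^ e"
  by (simp add: monomial_eval_def)

lemma monomial_eval_add: "monomial_eval \<sigma> (a + b) = monomial_eval \<sigma> a * monomial_eval \<sigma> b"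
proof -
  let ?K = "Poly_Mapping.keys a \<union> Poly_Mapping.keys b"
  have "monomial_eval \<sigma> (a + b) = (\<Prod>j\<in>?K. \<sigma> j ^ Poly_Mapping.lookup (a + b) j)"
    by (rule monomial_eval_superset) (auto simp: keys_add)
  also have "\<dots> = (\<Prod>j\<in>?K. \<sigma> j ^ Poly_Mapping.lookup a j * \<sigma> j ^ Poly_Mapping.lookup b j)"
    by (simp add: lookup_add power_add)
  also have "\<dots> = monomial_eval \<sigma> a * monomial_eval \<sigma> b"
    by (simp add: prod.distrib monomial_eval_superset[of ?K])
  finally show ?thesis .
qed

locale rat_hom =
  fixes \<kappa> :: "rat \<Rightarrow> 'a::comm_ring_1"
  assumes hom_add: "\<kappa> (a + b) = \<kappa> a + \<kappa> b"
    and hom_mult: "\<kappa> (a * b) = \<kappa> a * \<kappa> b"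
    and hom_one: "\<kappa> 1 = 1"
begin

lemma hom_zero: "\<kappa> 0 = 0"
  using hom_add[of 0 0] by simp

lemma mpoly_eval_superset:
  assumes "finite K" "Poly_Mapping.keys p \<subseteq> K"
  shows "mpoly_eval \<kappa> \<sigma> p = (\<Sum>m\<in>K. \<kappa> (Poly_Mapping.lookup p m) * monomial_eval \<sigma> m)"
  unfolding mpoly_eval_def
  by (rule sum.mono_neutral_left) (use assms in \<open>auto simp: in_keys_iff hom_zero\<close>)

lemma mpoly_eval_zero [simp]: "mpoly_eval \<kappa> \<sigma> 0 = 0"
  by (simp add: mpoly_eval_def)

lemma mpoly_eval_single: "mpoly_eval \<kappa> \<sigma> (Poly_Mapping.single m c) = \<kappa> c * monomial_eval \<sigma> m"
  by (cases "c = 0") (simp_all add: mpoly_eval_def hom_zero)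

lemma mpoly_eval_const: "mpoly_eval \<kappa> \<sigma> (Poly_Mapping.single 0 c) = \<kappa> c"
  by (simp add: mpoly_eval_single)

lemma mpoly_eval_one: "mpoly_eval \<kappa> \<sigma> 1 = 1"
  using mpoly_eval_const[of \<sigma> 1] by (simp add: hom_one)

lemma mpoly_eval_pvar: "mpoly_eval \<kappa> \<sigma> (pvar j) = \<sigma> j"
  by (simp add: pvar_def mpoly_eval_single monomial_eval_single hom_one)

lemma mpoly_eval_add: "mpoly_eval \<kappa> \<sigma> (p + q) = mpoly_eval \<kappa> \<sigma> p + mpoly_eval \<kappa> \<sigma> q"
proof -
  let ?K = "Poly_Mapping.keys p \<union> Poly_Mapping.keys q"
  have "mpoly_eval \<kappa> \<sigma> (p + q) = (\<Sum>m\<in>?K. \<kappa> (Poly_Mapping.lookup (p + q) m) * monomial_eval \<sigma> m)"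
    by (rule mpoly_eval_superset) (auto simp: keys_add)
  also have "\<dots> = (\<Sum>m\<in>?K. \<kappa> (Poly_Mapping.lookup p m) * monomial_eval \<sigma> m
      + \<kappa> (Poly_Mapping.lookup q m) * monomial_eval \<sigma> m)"
    by (simp add: lookup_add hom_add algebra_simps)
  also have "\<dots> = mpoly_eval \<kappa> \<sigma> p + mpoly_eval \<kappa> \<sigma> q"
    by (simp add: sum.distrib mpoly_eval_superset[of ?K])
  finally show ?thesis .
qed

lemma mpoly_eval_sum: "mpoly_eval \<kappa> \<sigma> (\<Sum>i\<in>I. f i) = (\<Sum>i\<in>I. mpoly_eval \<kappa> \<sigma> (f i))"
  by (induction I rule: infinite_finite_induct) (simp_all add: mpoly_eval_add)

lemma mpoly_eval_diff: "mpoly_eval \<kappa> \<sigma> (p - q) = mpoly_eval \<kappa> \<sigma> p - mpoly_eval \<kappa> \<sigma> q"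
  using mpoly_eval_add[of \<sigma> "p - q" q] by (simp add: eq_diff_eq)

lemma mpoly_eval_mult: "mpoly_eval \<kappa> \<sigma> (p * q) = mpoly_eval \<kappa> \<sigma> p * mpoly_eval \<kappa> \<sigma> q"
proof -
  have "p * q = (\<Sum>a\<in>Poly_Mapping.keys p. Poly_Mapping.single a (Poly_Mapping.lookup p a))
      * (\<Sum>b\<in>Poly_Mapping.keys q. Poly_Mapping.single b (Poly_Mapping.lookup q b))"
    by (simp add: sum_single_lookup)
  also have "\<dots> = (\<Sum>a\<in>Poly_Mapping.keys p. \<Sum>b\<in>Poly_Mapping.keys q.
      Poly_Mapping.single (a + b) (Poly_Mapping.lookup p a * Poly_Mapping.lookup q b))"
    by (simp only: sum_product mult_single)
  finally have pq: "p * q = \<dots>" .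
  show ?thesis
    unfolding pq mpoly_eval_sum mpoly_eval_single
    by (simp add: mpoly_eval_def hom_mult monomial_eval_add sum_product mult_ac)
qed

lemma mpoly_eval_prod: "mpoly_eval \<kappa> \<sigma> (\<Prod>i\<in>I. f i) = (\<Prod>i\<in>I. mpoly_eval \<kappa> \<sigma> (f i))"
  by (induction I rule: infinite_finite_induct) (simp_all add: mpoly_eval_mult mpoly_eval_one)

lemma mpoly_eval_power: "mpoly_eval \<kappa> \<sigma> (p ^ n) = mpoly_eval \<kappa> \<sigma> p ^ n"
  by (induction n) (simp_all add: mpoly_eval_mult mpoly_eval_one)

lemma mpoly_eval_monomial_eval:
  "mpoly_eval \<kappa> \<tau> (monomial_eval \<sigma> m) = monomial_eval (\<lambda>j. mpoly_eval \<kappa> \<tau> (\<sigma> j)) m"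
  by (simp add: monomial_eval_def mpoly_eval_prod mpoly_eval_power)

lemma mpoly_eval_psubst: "mpoly_eval \<kappa> \<tau> (psubst \<sigma> p) = mpoly_eval \<kappa> (\<lambda>j. mpoly_eval \<kappa> \<tau> (\<sigma> j)) p"
  by (simp add: psubst_def monomial_eval_def[symmetric] mpoly_eval_sum mpoly_eval_mult mpoly_eval_const
      mpoly_eval_monomial_eval mpoly_eval_def[of _ "\<lambda>j. mpoly_eval \<kappa> \<tau> (\<sigma> j)"])

end

interpretation const_mpoly: rat_hom "Poly_Mapping.single 0 :: rat \<Rightarrow> mpoly"
  by unfold_locales (simp_all add: single_add mult_single)

interpretation const_poly: rat_hom "\<lambda>c::rat. [:c:]"
  by unfold_locales simp_all

interpretation rat_id: rat_hom "\<lambda>c::rat. c"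
  by unfold_locales simp_all

lemma psubst_eq_mpoly_eval: "psubst \<sigma> = mpoly_eval (Poly_Mapping.single 0) \<sigma>"
  by (simp add: fun_eq_iff psubst_def mpoly_eval_def monomial_eval_def)

lemmas psubst_mult = const_mpoly.mpoly_eval_mult[folded psubst_eq_mpoly_eval]
  and psubst_one = const_mpoly.mpoly_eval_one[folded psubst_eq_mpoly_eval]
  and psubst_zero = const_mpoly.mpoly_eval_zero[folded psubst_eq_mpoly_eval]
  and psubst_diff = const_mpoly.mpoly_eval_diff[folded psubst_eq_mpoly_eval]
  and psubst_sum = const_mpoly.mpoly_eval_sum[folded psubst_eq_mpoly_eval]
  and psubst_prod = const_mpoly.mpoly_eval_prod[folded psubst_eq_mpoly_eval]
  and psubst_pvar = const_mpoly.mpoly_eval_pvar[folded psubst_eq_mpoly_eval]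

lemma pvar_power: "pvar j ^ e = Poly_Mapping.single (Poly_Mapping.single j e) 1"
  by (induction e) (simp_all add: pvar_def mult_single single_add[symmetric] add.commute)

lemma prod_single_1: "(\<Prod>j\<in>K. Poly_Mapping.single (f j) (1::rat)) = Poly_Mapping.single (\<Sum>j\<in>K. f j) 1"
  by (induction K rule: infinite_finite_induct) (simp_all add: mult_single)

lemma monomial_eval_pvar: "monomial_eval pvar m = Poly_Mapping.single m 1"
proof -
  have "monomial_eval pvar m
      = (\<Prod>j\<in>Poly_Mapping.keys m. Poly_Mapping.single (Poly_Mapping.single j (Poly_Mapping.lookup m j)) 1)"
    by (simp add: monomial_eval_def pvar_power)
  also have "\<dots> = Poly_Mapping.single (\<Sum>j\<in>Poly_Mapping.keys m. Poly_Mapping.single j (Poly_Mapping.lookup m j)) 1"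
    by (rule prod_single_1)
  also have "\<dots> = Poly_Mapping.single m 1"
    by (simp add: sum_single_lookup)
  finally show ?thesis .
qed

lemma psubst_pvar_self: "psubst pvar p = p"
  by (simp add: psubst_def monomial_eval_def[symmetric] monomial_eval_pvar mult_single sum_single_lookup)

lemma psubst_psubst: "psubst \<tau> (psubst \<sigma> p) = psubst (\<lambda>j. psubst \<tau> (\<sigma> j)) p"
  using const_mpoly.mpoly_eval_psubst[of \<tau> \<sigma> p] by (simp add: psubst_eq_mpoly_eval)

definition left_inverse_subst :: "(nat \<Rightarrow> mpoly) \<Rightarrow> (nat \<Rightarrow> mpoly) \<Rightarrow> bool" where
  "left_inverse_subst \<tau> \<sigma> \<longleftrightarrow> (\<forall>k. psubst \<tau> (\<sigma> k) = pvar k)"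

text \<open>\<open>rsubst\<close> is defined by choosing a representative \<open>p/q\<close>; a substitution with a left
  inverse maps nonzero denominators to nonzero ones, which makes the choice irrelevant.\<close>

context
  fixes \<sigma> \<tau> :: "nat \<Rightarrow> mpoly"
  assumes left_inverse: "left_inverse_subst \<tau> \<sigma>"
begin

lemma psubst_left_inverse: "psubst \<tau> (psubst \<sigma> p) = p"
  using left_inverse by (simp add: psubst_psubst left_inverse_subst_def psubst_pvar_self)

lemma psubst_nonzero: "q \<noteq> 0 \<Longrightarrow> psubst \<sigma> q \<noteq> 0"
  using psubst_left_inverse[of q] psubst_zero by metis

lemma rsubst_Fract: "q \<noteq> 0 \<Longrightarrow> rsubst \<sigma> (Fract p q) = Fract (psubst \<sigma> p) (psubst \<sigma> q)"
  unfolding rsubst_def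
proof (rule someI2[where a = "Fract (psubst \<sigma> p) (psubst \<sigma> q)"])
  assume "q \<noteq> 0"
  then show "\<exists>p' q'. q' \<noteq> 0 \<and> Fract p q = Fract p' q'
      \<and> Fract (psubst \<sigma> p) (psubst \<sigma> q) = Fract (psubst \<sigma> p') (psubst \<sigma> q')"
    by blast
next
  fix y assume q: "q \<noteq> 0"
    and "\<exists>p' q'. q' \<noteq> 0 \<and> Fract p q = Fract p' q' \<and> y = Fract (psubst \<sigma> p') (psubst \<sigma> q')"
  then obtain p' q' where q': "q' \<noteq> 0" and eq: "Fract p q = Fract p' q'"
    and y: "y = Fract (psubst \<sigma> p') (psubst \<sigma> q')"
    by blast
  from eq q q' have "p * q' = p' * q" by (simp add: eq_fract)
  then have "psubst \<sigma> p * psubst \<sigma> q' = psubst \<sigma> p' * psubst \<sigma> q"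
    by (metis psubst_mult)
  then show "y = Fract (psubst \<sigma> p) (psubst \<sigma> q)"
    unfolding y using psubst_nonzero[OF q] psubst_nonzero[OF q'] by (simp add: eq_fract)
qed

lemma rsubst_Fract_1: "rsubst \<sigma> (Fract p 1) = Fract (psubst \<sigma> p) 1"
  using rsubst_Fract[of 1 p] by (simp add: psubst_one)

lemma rsubst_zero: "rsubst \<sigma> 0 = 0"
  using rsubst_Fract_1[of 0] by (simp add: psubst_zero Zero_fract_def)

lemma rsubst_one: "rsubst \<sigma> 1 = 1"
  using rsubst_Fract_1[of 1] by (simp add: psubst_one One_fract_def)

lemma rsubst_mult: "rsubst \<sigma> (x * y) = rsubst \<sigma> x * rsubst \<sigma> y"
proof -
  obtain a b where x: "x = Fract a b" "b \<noteq> 0" by (cases x)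
  obtain c d where y: "y = Fract c d" "d \<noteq> 0" by (cases y)
  show ?thesis
    using x y by (simp add: rsubst_Fract psubst_mult)
qed

lemma rsubst_inverse: "rsubst \<sigma> (inverse x) = inverse (rsubst \<sigma> x)"
proof -
  obtain a b where x: "x = Fract a b" "b \<noteq> 0" by (cases x)
  show ?thesis
  proof (cases "a = 0")
    case True
    with x have "x = 0" by (simp add: fract_collapse)
    then show ?thesis by (simp add: rsubst_zero)
  next
    case False
    with x show ?thesis by (simp add: rsubst_Fract)
  qed
qed

lemma rsubst_power: "rsubst \<sigma> (x ^ n) = rsubst \<sigma> x ^ n"
  by (induction n) (simp_all add: rsubst_one rsubst_mult)

lemma rsubst_power_int: "rsubst \<sigma> (x powi k) = rsubst \<sigma> x powi k"
  by (simp add: power_int_def rsubst_power rsubst_inverse)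

lemma rsubst_prod: "rsubst \<sigma> (\<Prod>i\<in>I. f i) = (\<Prod>i\<in>I. rsubst \<sigma> (f i))"
  by (induction I rule: infinite_finite_induct) (simp_all add: rsubst_one rsubst_mult)

end

definition ff_eval :: "(nat set \<Rightarrow> 'a::field) \<Rightarrow> formal_fraction \<Rightarrow> 'a" where
  "ff_eval L F = (\<Prod>S\<in>Poly_Mapping.keys F. L S powi Poly_Mapping.lookup F S)"

lemma ff_eval_superset:
  "finite K \<Longrightarrow> Poly_Mapping.keys F \<subseteq> K \<Longrightarrow> ff_eval L F = (\<Prod>S\<in>K. L S powi Poly_Mapping.lookup F S)"
  unfolding ff_eval_def by (rule prod.mono_neutral_left) (auto simp: in_keys_iff)

lemma ff_eval_zero [simp]: "ff_eval L 0 = 1"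
  by (simp add: ff_eval_def)

lemma ff_eval_frag_of [simp]: "ff_eval L (frag_of S) = L S"
  by (simp add: ff_eval_def)

lemma ff_eval_minus: "ff_eval L (- F) = inverse (ff_eval L F)"
  unfolding ff_eval_def by (simp add: power_int_minus prod_inversef[symmetric] o_def)

lemma ff_eval_add:
  assumes "\<And>S. S \<in> Poly_Mapping.keys F \<union> Poly_Mapping.keys G \<Longrightarrow> L S \<noteq> 0"
  shows "ff_eval L (F + G) = ff_eval L F * ff_eval L G"
proof -
  let ?K = "Poly_Mapping.keys F \<union> Poly_Mapping.keys G"
  have "ff_eval L (F + G) = (\<Prod>S\<in>?K. L S powi Poly_Mapping.lookup (F + G) S)"
    by (rule ff_eval_superset) (auto simp: keys_add)
  also have "\<dots> = (\<Prod>S\<in>?K. L S powi Poly_Mapping.lookup F S * L S powi Poly_Mapping.lookup G S)"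
    by (rule prod.cong) (use assms in \<open>auto simp: lookup_add power_int_add\<close>)
  also have "\<dots> = ff_eval L F * ff_eval L G"
    by (simp add: prod.distrib ff_eval_superset[of ?K])
  finally show ?thesis .
qed

lemma ff_eval_diff:
  "(\<And>S. S \<in> Poly_Mapping.keys F \<union> Poly_Mapping.keys G \<Longrightarrow> L S \<noteq> 0)
    \<Longrightarrow> ff_eval L (F - G) = ff_eval L F / ff_eval L G"
  using ff_eval_add[of F "- G" L] by (simp add: ff_eval_minus divide_inverse)

lemma ff_eval_cong: "(\<And>S. S \<in> Poly_Mapping.keys F \<Longrightarrow> L S = L' S) \<Longrightarrow> ff_eval L F = ff_eval L' F"
  unfolding ff_eval_def by simp

lemma ff_eval_nonzero: "(\<And>S. S \<in> Poly_Mapping.keys F \<Longrightarrow> L S \<noteq> 0) \<Longrightarrow> ff_eval L F \<noteq> 0"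
  unfolding ff_eval_def by (simp add: power_int_eq_0_iff)

lemma rsubst_ff_eval: "left_inverse_subst \<tau> \<sigma> \<Longrightarrow> rsubst \<sigma> (ff_eval L F) = ff_eval (\<lambda>S. rsubst \<sigma> (L S)) F"
  unfolding ff_eval_def by (simp add: rsubst_prod rsubst_power_int)

lemma ff_eval_ff_subst:
  assumes "Poly_Mapping.keys F \<subseteq> U" and nonzero: "\<And>S. S \<in> U \<Longrightarrow> L (\<Union>k\<in>S. A k) \<noteq> 0"
  shows "ff_eval L (ff_subst A F) = ff_eval (\<lambda>S. L (\<Union>k\<in>S. A k)) F"
proof -
  have "Poly_Mapping.keys F \<subseteq> U \<and> ff_eval L (ff_subst A F) = ff_eval (\<lambda>S. L (\<Union>k\<in>S. A k)) F"
    using assms(1)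
  proof (induction F rule: frag_induction)
    case (diff a b)
    from diff.IH have keys: "Poly_Mapping.keys a \<union> Poly_Mapping.keys b \<subseteq> U" by simp
    have "Poly_Mapping.keys (ff_subst A a) \<union> Poly_Mapping.keys (ff_subst A b)
        \<subseteq> (\<lambda>S. \<Union>k\<in>S. A k) ` (Poly_Mapping.keys a \<union> Poly_Mapping.keys b)"
      unfolding image_Un by (intro Un_mono keys_ff_subst)
    also have "\<dots> \<subseteq> (\<lambda>S. \<Union>k\<in>S. A k) ` U"
      using keys by (rule image_mono)
    finally have subst_keys:
      "Poly_Mapping.keys (ff_subst A a) \<union> Poly_Mapping.keys (ff_subst A b) \<subseteq> (\<lambda>S. \<Union>k\<in>S. A k) ` U" .
    have "ff_eval L (ff_subst A (a - b)) = ff_eval L (ff_subst A a) / ff_eval L (ff_subst A b)"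
      unfolding ff_subst_diff by (rule ff_eval_diff) (use subst_keys nonzero in blast)
    also have "\<dots> = ff_eval (\<lambda>S. L (\<Union>k\<in>S. A k)) a / ff_eval (\<lambda>S. L (\<Union>k\<in>S. A k)) b"
      using diff.IH by simp
    also have "\<dots> = ff_eval (\<lambda>S. L (\<Union>k\<in>S. A k)) (a - b)"
      by (rule ff_eval_diff[symmetric]) (use keys nonzero in blast)
    finally have "ff_eval L (ff_subst A (a - b)) = ff_eval (\<lambda>S. L (\<Union>k\<in>S. A k)) (a - b)" .
    moreover have "Poly_Mapping.keys (a - b) \<subseteq> U"
      using keys keys_diff[of a b] by blast
    ultimately show ?case by blast
  qed simp_all
  then show ?thesis ..
qed

section \<open>The morphisms \<open>\<phi>\<^sup>0\<close> and \<open>\<phi>\<^sup>1\<close>\<close>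

definition phi0_symbol :: "nat set \<Rightarrow> ratfun" where
  "phi0_symbol S = (\<Sum>j\<in>S. u j)"

definition phi1_symbol :: "nat set \<Rightarrow> ratfun" where
  "phi1_symbol S = (\<Prod>j\<in>S. u j) - 1"

lemma phi0_eq_ff_eval: "phi0 = ff_eval phi0_symbol"
  by (simp add: fun_eq_iff phi0_def ff_eval_def phi0_symbol_def)

lemma phi1_eq_ff_eval: "phi1 = ff_eval phi1_symbol"
  by (simp add: fun_eq_iff phi1_def ff_eval_def phi1_symbol_def)

lemma Fract_sum_1: "(\<Sum>j\<in>S. Fract (f j) (1::'a::idom)) = Fract (\<Sum>j\<in>S. f j) 1"
  by (induction S rule: infinite_finite_induct) (simp_all add: Zero_fract_def)

lemma Fract_prod_1: "(\<Prod>j\<in>S. Fract (f j) (1::'a::idom)) = Fract (\<Prod>j\<in>S. f j) 1"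
  by (induction S rule: infinite_finite_induct) (simp_all add: One_fract_def)

lemma Fract_power_1: "Fract (p::'a::idom) 1 ^ k = Fract (p ^ k) 1"
  by (induction k) (simp_all add: One_fract_def)

lemma Fract_1_eq_0_iff: "Fract (p::'a::idom) 1 = 0 \<longleftrightarrow> p = 0"
  by (simp add: Zero_fract_def eq_fract)

lemma phi0_symbol_Fract: "phi0_symbol S = Fract (\<Sum>j\<in>S. pvar j) 1"
  by (simp add: phi0_symbol_def u_def Fract_sum_1)

lemma phi1_symbol_Fract: "phi1_symbol S = Fract ((\<Prod>j\<in>S. pvar j) - 1) 1"
  by (simp add: phi1_symbol_def u_def Fract_prod_1 One_fract_def)

definition finite_nonempty_sets :: "nat set set" where
  "finite_nonempty_sets = {S. finite S \<and> S \<noteq> {}}"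

lemma keys_FF_finite_nonempty: "F \<in> FF n \<Longrightarrow> Poly_Mapping.keys F \<subseteq> finite_nonempty_sets"
  unfolding FF_def finite_nonempty_sets_def by (auto dest: finite_subset[OF _ finite_atLeastAtMost] subsetD)

lemma UN_finite_nonempty_sets:
  "S \<in> finite_nonempty_sets \<Longrightarrow> (\<And>k. finite (A k) \<and> A k \<noteq> {}) \<Longrightarrow> (\<Union>k\<in>S. A k) \<in> finite_nonempty_sets"
  unfolding finite_nonempty_sets_def by auto

lemma sum_pvar_nonzero:
  assumes "S \<in> finite_nonempty_sets"
  shows "(\<Sum>j\<in>S. pvar j) \<noteq> 0"
proof
  assume "(\<Sum>j\<in>S. pvar j) = 0"
  then have "mpoly_eval (\<lambda>c. c) (\<lambda>_. 1) (\<Sum>j\<in>S. pvar j) = 0" by simp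
  then have "of_nat (card S) = (0::rat)"
    by (simp add: rat_id.mpoly_eval_sum rat_id.mpoly_eval_pvar)
  with assms show False by (simp add: finite_nonempty_sets_def)
qed

lemma prod_pvar_minus_1_nonzero:
  assumes "S \<in> finite_nonempty_sets"
  shows "(\<Prod>j\<in>S. pvar j) - 1 \<noteq> 0"
proof
  assume "(\<Prod>j\<in>S. pvar j) - 1 = 0"
  then have "mpoly_eval (\<lambda>c. c) (\<lambda>_. 2) ((\<Prod>j\<in>S. pvar j) - 1) = 0" by simp
  then have "(2::rat) ^ card S = 1"
    by (simp add: rat_id.mpoly_eval_diff rat_id.mpoly_eval_prod rat_id.mpoly_eval_pvar rat_id.mpoly_eval_one)
  moreover from assms have "(1::rat) < 2 ^ card S"
    by (intro one_less_power) (auto simp: finite_nonempty_sets_def)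
  ultimately show False by simp
qed

lemma phi0_symbol_nonzero: "S \<in> finite_nonempty_sets \<Longrightarrow> phi0_symbol S \<noteq> 0"
  unfolding phi0_symbol_Fract Fract_1_eq_0_iff by (rule sum_pvar_nonzero)

lemma phi1_symbol_nonzero: "S \<in> finite_nonempty_sets \<Longrightarrow> phi1_symbol S \<noteq> 0"
  unfolding phi1_symbol_Fract Fract_1_eq_0_iff by (rule prod_pvar_minus_1_nonzero)

lemma outer_blocks_finite_nonempty: "1 \<le> n \<Longrightarrow> finite (outer_blocks i n k) \<and> outer_blocks i n k \<noteq> {}"
  by (auto simp: outer_blocks_def Sblock_def)

lemma inner_blocks_finite_nonempty: "finite (inner_blocks i k) \<and> inner_blocks i k \<noteq> {}"
  by (simp add: inner_blocks_def)

lemma outer_blocks_disjoint: "1 \<le> n \<Longrightarrow> k \<noteq> k' \<Longrightarrow> outer_blocks i n k \<inter> outer_blocks i n k' = {}"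
  by (auto simp: outer_blocks_def Sblock_def split: if_splits)

lemma inner_blocks_disjoint: "1 \<le> i \<Longrightarrow> k \<noteq> k' \<Longrightarrow> inner_blocks i k \<inter> inner_blocks i k' = {}"
  by (auto simp: inner_blocks_def)

lemma outer_subst_Sigma_eq_sum:
  "1 \<le> n \<Longrightarrow> outer_subst i n (Sigma_poly i n) k = (\<Sum>l\<in>outer_blocks i n k. pvar l)"
  by (simp add: outer_subst_def outer_blocks_def Sigma_poly_def)

lemma outer_subst_Pi_eq_prod:
  "1 \<le> n \<Longrightarrow> outer_subst i n (Pi_poly i n) k = (\<Prod>l\<in>outer_blocks i n k. pvar l)"
  by (simp add: outer_subst_def outer_blocks_def Pi_poly_def)

lemma inner_subst_eq_sum: "inner_subst i k = (\<Sum>l\<in>inner_blocks i k. pvar l)"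
  by (simp add: inner_subst_def inner_blocks_def)

lemma inner_subst_eq_prod: "inner_subst i k = (\<Prod>l\<in>inner_blocks i k. pvar l)"
  by (simp add: inner_subst_def inner_blocks_def)

text \<open>Sending the variables of the block other than \<open>u\<^sub>i\<close> to the neutral element \<open>c\<close> of the block
  operation recovers \<open>u\<^sub>i\<close> from \<open>\<Sigma>\<close> (\<open>c = 0\<close>) or from \<open>\<Pi>\<close> (\<open>c = 1\<close>); the variables after the block
  are shifted back.\<close>

definition collapse_block_subst :: "nat \<Rightarrow> nat \<Rightarrow> mpoly \<Rightarrow> nat \<Rightarrow> mpoly" where
  "collapse_block_subst i n c j = (if j \<le> i then pvar j else if j < i + n then c else pvar (j + 1 - n))"

definition shift_subst :: "nat \<Rightarrow> nat \<Rightarrow> mpoly" where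
  "shift_subst i j = pvar (j + 1 - i)"

lemma collapse_block_subst_outer_subst:
  assumes "1 \<le> n" "k \<noteq> i"
  shows "psubst (collapse_block_subst i n c) (outer_subst i n X k) = pvar k"
  using assms by (auto simp: outer_subst_def psubst_pvar collapse_block_subst_def)

lemma left_inverse_outer_subst_Sigma:
  assumes "1 \<le> n"
  shows "left_inverse_subst (collapse_block_subst i n 0) (outer_subst i n (Sigma_poly i n))"
  unfolding left_inverse_subst_def
proof
  fix k
  have "psubst (collapse_block_subst i n 0) (Sigma_poly i n) = (\<Sum>j\<in>Sblock i n. if j = i then pvar i else 0)"
    by (simp add: Sigma_poly_def psubst_sum psubst_pvar)
      (rule sum.cong, auto simp: collapse_block_subst_def Sblock_def)
  also have "\<dots> = pvar i"
    using assms by (simp add: Sblock_def)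
  finally show "psubst (collapse_block_subst i n 0) (outer_subst i n (Sigma_poly i n) k) = pvar k"
    using assms collapse_block_subst_outer_subst[OF assms] by (cases "k = i") (simp_all add: outer_subst_def)
qed

lemma left_inverse_outer_subst_Pi:
  assumes "1 \<le> n"
  shows "left_inverse_subst (collapse_block_subst i n 1) (outer_subst i n (Pi_poly i n))"
  unfolding left_inverse_subst_def
proof
  fix k
  have "psubst (collapse_block_subst i n 1) (Pi_poly i n) = (\<Prod>j\<in>Sblock i n. if j = i then pvar i else 1)"
    by (simp add: Pi_poly_def psubst_prod psubst_pvar)
      (rule prod.cong, auto simp: collapse_block_subst_def Sblock_def)
  also have "\<dots> = pvar i"
    using assms by (simp add: Sblock_def)
  finally show "psubst (collapse_block_subst i n 1) (outer_subst i n (Pi_poly i n) k) = pvar k"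
    using assms collapse_block_subst_outer_subst[OF assms] by (cases "k = i") (simp_all add: outer_subst_def)
qed

lemma left_inverse_inner_subst: "1 \<le> i \<Longrightarrow> left_inverse_subst (shift_subst i) (inner_subst i)"
  by (simp add: left_inverse_subst_def inner_subst_def shift_subst_def psubst_pvar)

lemma rsubst_phi0_symbol:
  assumes "left_inverse_subst \<tau> \<sigma>" and \<sigma>: "\<And>k. \<sigma> k = (\<Sum>l\<in>A k. pvar l)"
    and "\<And>k. finite (A k)" "\<And>k k'. k \<noteq> k' \<Longrightarrow> A k \<inter> A k' = {}" "finite S"
  shows "rsubst \<sigma> (phi0_symbol S) = phi0_symbol (\<Union>k\<in>S. A k)"
proof -
  have "rsubst \<sigma> (phi0_symbol S) = Fract (\<Sum>k\<in>S. \<Sum>l\<in>A k. pvar l) 1"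
    by (simp add: phi0_symbol_Fract rsubst_Fract_1[OF assms(1)] psubst_sum psubst_pvar \<sigma>)
  also have "(\<Sum>k\<in>S. \<Sum>l\<in>A k. pvar l) = (\<Sum>l\<in>(\<Union>k\<in>S. A k). pvar l)"
    by (rule sum.UNION_disjoint[symmetric]) (use assms in auto)
  finally show ?thesis by (simp add: phi0_symbol_Fract)
qed

lemma rsubst_phi1_symbol:
  assumes "left_inverse_subst \<tau> \<sigma>" and \<sigma>: "\<And>k. \<sigma> k = (\<Prod>l\<in>A k. pvar l)"
    and "\<And>k. finite (A k)" "\<And>k k'. k \<noteq> k' \<Longrightarrow> A k \<inter> A k' = {}" "finite S"
  shows "rsubst \<sigma> (phi1_symbol S) = phi1_symbol (\<Union>k\<in>S. A k)"
proof -
  have "rsubst \<sigma> (phi1_symbol S) = Fract ((\<Prod>k\<in>S. \<Prod>l\<in>A k. pvar l) - 1) 1"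
    by (simp add: phi1_symbol_Fract rsubst_Fract_1[OF assms(1)] psubst_prod psubst_pvar \<sigma> psubst_diff psubst_one)
  also have "(\<Prod>k\<in>S. \<Prod>l\<in>A k. pvar l) = (\<Prod>l\<in>(\<Union>k\<in>S. A k). pvar l)"
    by (rule prod.UNION_disjoint[symmetric]) (use assms in auto)
  finally show ?thesis by (simp add: phi1_symbol_Fract)
qed

lemma ff_eval_ff_comp:
  fixes L :: "nat set \<Rightarrow> ratfun"
  assumes nonzero: "\<And>S. S \<in> finite_nonempty_sets \<Longrightarrow> L S \<noteq> 0"
    and outer_inv: "left_inverse_subst \<tau>\<^sub>O \<sigma>\<^sub>O" and inner_inv: "left_inverse_subst \<tau>\<^sub>I \<sigma>\<^sub>I"
    and outer: "\<And>S. S \<in> finite_nonempty_sets \<Longrightarrow> rsubst \<sigma>\<^sub>O (L S) = L (\<Union>k\<in>S. outer_blocks i n k)"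
    and inner: "\<And>S. S \<in> finite_nonempty_sets \<Longrightarrow> rsubst \<sigma>\<^sub>I (L S) = L (\<Union>k\<in>S. inner_blocks i k)"
    and x: "Poly_Mapping.keys x \<subseteq> finite_nonempty_sets" and y: "Poly_Mapping.keys y \<subseteq> finite_nonempty_sets"
    and n: "1 \<le> n"
  shows "ff_eval L (ff_comp x i n y) = L (Sblock i n) * rsubst \<sigma>\<^sub>O (ff_eval L x) * rsubst \<sigma>\<^sub>I (ff_eval L y)"
proof -
  have outer_fns: "(\<Union>k\<in>S. outer_blocks i n k) \<in> finite_nonempty_sets" if "S \<in> finite_nonempty_sets" for S
    using UN_finite_nonempty_sets[OF that] outer_blocks_finite_nonempty[OF n] by blast
  have inner_fns: "(\<Union>k\<in>S. inner_blocks i k) \<in> finite_nonempty_sets" if "S \<in> finite_nonempty_sets" for S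
    using UN_finite_nonempty_sets[OF that] inner_blocks_finite_nonempty by blast
  have block: "Sblock i n \<in> finite_nonempty_sets"
    using n by (simp add: finite_nonempty_sets_def Sblock_def)
  have keys_outer: "Poly_Mapping.keys (ff_subst (outer_blocks i n) x) \<subseteq> finite_nonempty_sets"
    using keys_ff_subst[of "outer_blocks i n" x] x outer_fns by blast
  have keys_inner: "Poly_Mapping.keys (ff_subst (inner_blocks i) y) \<subseteq> finite_nonempty_sets"
    using keys_ff_subst[of "inner_blocks i" y] y inner_fns by blast
  have keys_first: "Poly_Mapping.keys (frag_of (Sblock i n) + ff_subst (outer_blocks i n) x) \<subseteq> finite_nonempty_sets"
    using keys_add[of "frag_of (Sblock i n)" "ff_subst (outer_blocks i n) x"] keys_outer block by auto
  have "ff_eval L (ff_comp x i n y)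
      = ff_eval L (frag_of (Sblock i n) + ff_subst (outer_blocks i n) x) * ff_eval L (ff_subst (inner_blocks i) y)"
    unfolding ff_comp_eq by (rule ff_eval_add) (use keys_first keys_inner nonzero in blast)
  also have "ff_eval L (frag_of (Sblock i n) + ff_subst (outer_blocks i n) x)
      = L (Sblock i n) * ff_eval L (ff_subst (outer_blocks i n) x)"
    by (subst ff_eval_add) (use keys_outer block nonzero in auto)
  also have "ff_eval L (ff_subst (outer_blocks i n) x) = ff_eval (\<lambda>S. L (\<Union>k\<in>S. outer_blocks i n k)) x"
    by (rule ff_eval_ff_subst[OF x]) (use outer_fns nonzero in blast)
  also have "\<dots> = rsubst \<sigma>\<^sub>O (ff_eval L x)"
    unfolding rsubst_ff_eval[OF outer_inv] by (rule ff_eval_cong) (use x outer in auto)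
  also have "ff_eval L (ff_subst (inner_blocks i) y) = ff_eval (\<lambda>S. L (\<Union>k\<in>S. inner_blocks i k)) y"
    by (rule ff_eval_ff_subst[OF y]) (use inner_fns nonzero in blast)
  also have "\<dots> = rsubst \<sigma>\<^sub>I (ff_eval L y)"
    unfolding rsubst_ff_eval[OF inner_inv] by (rule ff_eval_cong) (use y inner in auto)
  finally show ?thesis .
qed

lemma phi0_ff_comp:
  assumes "1 \<le> n" "x \<in> FF m" "y \<in> FF n" "1 \<le> i"
  shows "phi0 (ff_comp x i n y) = mould0_comp (phi0 x) i n (phi0 y)"
proof -
  have finite: "finite S" if "S \<in> finite_nonempty_sets" for S
    using that by (simp add: finite_nonempty_sets_def)
  have "ff_eval phi0_symbol (ff_comp x i n y) = phi0_symbol (Sblock i n)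
      * rsubst (outer_subst i n (Sigma_poly i n)) (ff_eval phi0_symbol x)
      * rsubst (inner_subst i) (ff_eval phi0_symbol y)"
  proof (rule ff_eval_ff_comp[OF phi0_symbol_nonzero
        left_inverse_outer_subst_Sigma[OF assms(1)] left_inverse_inner_subst[OF assms(4)]])
    fix S assume "S \<in> finite_nonempty_sets"
    with finite show "rsubst (outer_subst i n (Sigma_poly i n)) (phi0_symbol S) = phi0_symbol (\<Union>k\<in>S. outer_blocks i n k)"
      by (intro rsubst_phi0_symbol[OF left_inverse_outer_subst_Sigma outer_subst_Sigma_eq_sum])
        (use assms outer_blocks_finite_nonempty outer_blocks_disjoint in auto)
    from \<open>S \<in> finite_nonempty_sets\<close> finite show "rsubst (inner_subst i) (phi0_symbol S) = phi0_symbol (\<Union>k\<in>S. inner_blocks i k)"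
      by (intro rsubst_phi0_symbol[OF left_inverse_inner_subst inner_subst_eq_sum])
        (use assms inner_blocks_finite_nonempty inner_blocks_disjoint in auto)
  qed (use assms keys_FF_finite_nonempty in auto)
  then show ?thesis
    by (simp add: phi0_eq_ff_eval mould0_comp_def phi0_symbol_Fract Sigma_poly_def)
qed

lemma phi1_ff_comp:
  assumes "1 \<le> n" "x \<in> FF m" "y \<in> FF n" "1 \<le> i"
  shows "phi1 (ff_comp x i n y) = mould1_comp (phi1 x) i n (phi1 y)"
proof -
  have finite: "finite S" if "S \<in> finite_nonempty_sets" for S
    using that by (simp add: finite_nonempty_sets_def)
  have "ff_eval phi1_symbol (ff_comp x i n y) = phi1_symbol (Sblock i n)
      * rsubst (outer_subst i n (Pi_poly i n)) (ff_eval phi1_symbol x)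
      * rsubst (inner_subst i) (ff_eval phi1_symbol y)"
  proof (rule ff_eval_ff_comp[OF phi1_symbol_nonzero
        left_inverse_outer_subst_Pi[OF assms(1)] left_inverse_inner_subst[OF assms(4)]])
    fix S assume "S \<in> finite_nonempty_sets"
    with finite show "rsubst (outer_subst i n (Pi_poly i n)) (phi1_symbol S) = phi1_symbol (\<Union>k\<in>S. outer_blocks i n k)"
      by (intro rsubst_phi1_symbol[OF left_inverse_outer_subst_Pi outer_subst_Pi_eq_prod])
        (use assms outer_blocks_finite_nonempty outer_blocks_disjoint in auto)
    from \<open>S \<in> finite_nonempty_sets\<close> finite show "rsubst (inner_subst i) (phi1_symbol S) = phi1_symbol (\<Union>k\<in>S. inner_blocks i k)"
      by (intro rsubst_phi1_symbol[OF left_inverse_inner_subst inner_subst_eq_prod])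
        (use assms inner_blocks_finite_nonempty inner_blocks_disjoint in auto)
  qed (use assms keys_FF_finite_nonempty in auto)
  then show ?thesis
    by (simp add: phi1_eq_ff_eval mould1_comp_def phi1_symbol_Fract Pi_poly_def One_fract_def)
qed

lemma phi0_ff_unit: "phi0 ff_unit = inverse (u 1)"
  by (simp add: phi0_eq_ff_eval ff_unit_def ff_eval_minus phi0_symbol_def)

lemma phi1_ff_unit: "phi1 ff_unit = inverse (u 1 - 1)"
  by (simp add: phi1_eq_ff_eval ff_unit_def ff_eval_minus phi1_symbol_def)

lemma pvars_zero [simp]: "pvars 0 = {}"
  by (simp add: pvars_def)

lemma pvars_one [simp]: "pvars 1 = {}"
  by (simp add: pvars_def)

lemma pvars_pvar [simp]: "pvars (pvar j) = {j}"
  by (simp add: pvars_def pvar_def)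

lemma pvars_add: "pvars (p + q) \<subseteq> pvars p \<union> pvars q"
  unfolding pvars_def using keys_add[of p q] by blast

lemma pvars_uminus: "pvars (- p) = pvars p"
  unfolding pvars_def by (simp add: in_keys_iff keys_def)

lemma pvars_diff: "pvars (p - q) \<subseteq> pvars p \<union> pvars q"
  using pvars_add[of p "- q"] pvars_uminus[of q] by simp

lemma pvars_mult: "pvars (p * q) \<subseteq> pvars p \<union> pvars q"
proof
  fix j assume "j \<in> pvars (p * q)"
  then obtain m where m: "m \<in> Poly_Mapping.keys (p * q)" "j \<in> Poly_Mapping.keys m"
    unfolding pvars_def by blast
  then obtain a b where ab: "m = a + b" "a \<in> Poly_Mapping.keys p" "b \<in> Poly_Mapping.keys q"
    using keys_mult[of p q] by blast
  with m(2) have "j \<in> Poly_Mapping.keys a \<union> Poly_Mapping.keys b"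
    using keys_add[of a b] by blast
  with ab show "j \<in> pvars p \<union> pvars q"
    unfolding pvars_def by blast
qed

lemma pvars_sum: "pvars (\<Sum>i\<in>I. f i) \<subseteq> (\<Union>i\<in>I. pvars (f i))"
proof (induction I rule: infinite_finite_induct)
  case (insert x F)
  then show ?case using pvars_add[of "f x" "sum f F"] by auto
qed auto

lemma pvars_prod: "pvars (\<Prod>i\<in>I. f i) \<subseteq> (\<Union>i\<in>I. pvars (f i))"
proof (induction I rule: infinite_finite_induct)
  case (insert x F)
  then show ?case using pvars_mult[of "f x" "prod f F"] by auto
qed auto

lemma Fract_in_Mould: "q \<noteq> 0 \<Longrightarrow> pvars p \<subseteq> {1..n} \<Longrightarrow> pvars q \<subseteq> {1..n} \<Longrightarrow> Fract p q \<in> Mould n"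
  unfolding Mould_def by blast

lemma zero_in_Mould: "0 \<in> Mould n"
  using Fract_in_Mould[of 1 0 n] by (simp add: Zero_fract_def)

lemma one_in_Mould: "1 \<in> Mould n"
  using Fract_in_Mould[of 1 1 n] by (simp add: One_fract_def)

lemma mult_in_Mould:
  assumes "x \<in> Mould n" "y \<in> Mould n"
  shows "x * y \<in> Mould n"
proof -
  obtain p q where x: "x = Fract p q" "q \<noteq> 0" "pvars p \<subseteq> {1..n}" "pvars q \<subseteq> {1..n}"
    using assms(1) unfolding Mould_def by blast
  obtain p' q' where y: "y = Fract p' q'" "q' \<noteq> 0" "pvars p' \<subseteq> {1..n}" "pvars q' \<subseteq> {1..n}"
    using assms(2) unfolding Mould_def by blast
  show ?thesis
    unfolding x y mult_fract
    by (rule Fract_in_Mould) (use x y pvars_mult[of p p'] pvars_mult[of q q'] in auto)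
qed

lemma inverse_in_Mould:
  assumes "x \<in> Mould n"
  shows "inverse x \<in> Mould n"
proof -
  obtain p q where x: "x = Fract p q" "q \<noteq> 0" "pvars p \<subseteq> {1..n}" "pvars q \<subseteq> {1..n}"
    using assms unfolding Mould_def by blast
  show ?thesis
  proof (cases "p = 0")
    case True
    with x show ?thesis by (simp add: fract_collapse zero_in_Mould)
  next
    case False
    then show ?thesis
      unfolding x inverse_fract by (rule Fract_in_Mould) (use x in auto)
  qed
qed

lemma power_int_in_Mould: "x \<in> Mould n \<Longrightarrow> x powi k \<in> Mould n"
proof -
  assume "x \<in> Mould n"
  moreover have "y ^ e \<in> Mould n" if "y \<in> Mould n" for y and e :: nat
    using that by (induction e) (simp_all add: one_in_Mould mult_in_Mould)
  ultimately show ?thesis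
    by (simp add: power_int_def inverse_in_Mould)
qed

lemma prod_in_Mould: "(\<And>i. i \<in> I \<Longrightarrow> f i \<in> Mould n) \<Longrightarrow> (\<Prod>i\<in>I. f i) \<in> Mould n"
  by (induction I rule: infinite_finite_induct) (simp_all add: one_in_Mould mult_in_Mould)

lemma ff_eval_in_Mould:
  assumes "F \<in> FF n" "\<And>S. S \<noteq> {} \<Longrightarrow> S \<subseteq> {1..n} \<Longrightarrow> L S \<in> Mould n"
  shows "ff_eval L F \<in> Mould n"
proof -
  from assms(1) have "Poly_Mapping.keys F \<subseteq> {S. S \<noteq> {} \<and> S \<subseteq> {1..n}}"
    by (simp add: FF_def)
  then show ?thesis
    unfolding ff_eval_def by (intro prod_in_Mould power_int_in_Mould assms(2)) auto
qed

lemma phi0_in_Mould: "F \<in> FF n \<Longrightarrow> phi0 F \<in> Mould n"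
  unfolding phi0_eq_ff_eval
proof (rule ff_eval_in_Mould)
  fix S :: "nat set" assume "S \<subseteq> {1..n}"
  then have "pvars (\<Sum>j\<in>S. pvar j) \<subseteq> {1..n}"
    using pvars_sum[of pvar S] by auto
  then show "phi0_symbol S \<in> Mould n"
    unfolding phi0_symbol_Fract by (intro Fract_in_Mould) auto
qed

lemma phi1_in_Mould: "F \<in> FF n \<Longrightarrow> phi1 F \<in> Mould n"
  unfolding phi1_eq_ff_eval
proof (rule ff_eval_in_Mould)
  fix S :: "nat set" assume "S \<subseteq> {1..n}"
  then have "pvars ((\<Prod>j\<in>S. pvar j) - 1) \<subseteq> {1..n}"
    using pvars_diff[of "\<Prod>j\<in>S. pvar j" 1] pvars_prod[of pvar S] by auto
  then show "phi1_symbol S \<in> Mould n"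
    unfolding phi1_symbol_Fract by (intro Fract_in_Mould) auto
qed

theorem operad_morphism_phi0: "is_operad_morphism FF ff_comp ff_unit Mould mould0_comp (inverse (u 1)) phi0"
  unfolding is_operad_morphism_def using phi0_in_Mould phi0_ff_unit phi0_ff_comp by blast

theorem operad_morphism_phi1: "is_operad_morphism FF ff_comp ff_unit Mould mould1_comp (inverse (u 1 - 1)) phi1"
  unfolding is_operad_morphism_def using phi1_in_Mould phi1_ff_unit phi1_ff_comp by blast

section \<open>Injectivity of \<open>\<phi>\<^sup>0\<close> and \<open>\<phi>\<^sup>1\<close>\<close>

lemma order_prod:
  fixes f :: "'i \<Rightarrow> 'a::idom poly"
  shows "finite I \<Longrightarrow> (\<And>i. i \<in> I \<Longrightarrow> f i \<noteq> 0) \<Longrightarrow> order a (\<Prod>i\<in>I. f i) = (\<Sum>i\<in>I. order a (f i))"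
proof (induction I rule: finite_induct)
  case (insert x F)
  then have "f x * (\<Prod>i\<in>F. f i) \<noteq> 0" by simp
  with insert show ?case by (simp add: order_mult)
qed simp

lemma order_power: "(p :: 'a::idom poly) \<noteq> 0 \<Longrightarrow> order a (p ^ k) = k * order a p"
  by (induction k) (simp_all add: order_mult)

lemma power_int_eq_power_divide: "(x::'a::field) powi k = x ^ nat k / x ^ nat (- k)"
  by (cases "k \<ge> 0") (auto simp: power_int_def power_inverse divide_inverse)

definition isolating_specialization :: "(nat set \<Rightarrow> mpoly) \<Rightarrow> nat set \<Rightarrow> (nat \<Rightarrow> rat poly) \<Rightarrow> rat \<Rightarrow> bool" where
  "isolating_specialization Lp S\<^sub>0 \<tau> r \<longleftrightarrow>
     mpoly_eval (\<lambda>c. [:c:]) \<tau> (Lp S\<^sub>0) \<noteq> 0 \<and> order r (mpoly_eval (\<lambda>c. [:c:]) \<tau> (Lp S\<^sub>0)) = 1 \<and>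
     (\<forall>S\<in>finite_nonempty_sets. \<not> S \<subseteq> S\<^sub>0 \<longrightarrow> poly (mpoly_eval (\<lambda>c. [:c:]) \<tau> (Lp S)) r \<noteq> 0)"

lemma isolating_specialization_sum:
  assumes "S\<^sub>0 \<in> finite_nonempty_sets"
  shows "isolating_specialization (\<lambda>S. \<Sum>j\<in>S. pvar j) S\<^sub>0 (\<lambda>j. if j \<in> S\<^sub>0 then [:0, 1:] else 1) 0"
proof -
  define \<tau> :: "nat \<Rightarrow> rat poly" where "\<tau> j = (if j \<in> S\<^sub>0 then [:0, 1:] else 1)" for j
  have eval: "mpoly_eval (\<lambda>c. [:c:]) \<tau> (\<Sum>j\<in>S. pvar j) = (\<Sum>j\<in>S. \<tau> j)" for S
    by (simp add: const_poly.mpoly_eval_sum const_poly.mpoly_eval_pvar)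
  have "poly (\<Sum>j\<in>S. \<tau> j) 0 \<noteq> 0" if "S \<in> finite_nonempty_sets" "\<not> S \<subseteq> S\<^sub>0" for S
  proof -
    from that obtain j where "j \<in> S" "j \<notin> S\<^sub>0" "finite S"
      by (auto simp: finite_nonempty_sets_def)
    then have "(1::rat) \<le> (\<Sum>i\<in>S. poly (\<tau> i) 0)"
      using member_le_sum[of j S "\<lambda>i. poly (\<tau> i) 0"] by (simp add: \<tau>_def)
    then show ?thesis by (auto simp: poly_sum)
  qed
  moreover have card: "(of_nat (card S\<^sub>0) :: rat) \<noteq> 0"
    using assms by (simp add: finite_nonempty_sets_def)
  have sum_S\<^sub>0: "(\<Sum>j\<in>S\<^sub>0. \<tau> j) = smult (of_nat (card S\<^sub>0)) [:0, 1:]"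
    by (simp add: \<tau>_def of_nat_poly)
  have "order 0 (\<Sum>j\<in>S\<^sub>0. \<tau> j) = 1"
    unfolding sum_S\<^sub>0 order_smult[OF card] using order_power_n_n[of "0::rat" 1] by simp
  moreover have "(\<Sum>j\<in>S\<^sub>0. \<tau> j) \<noteq> 0"
    using card by (simp add: sum_S\<^sub>0)
  ultimately show ?thesis
    unfolding isolating_specialization_def eval \<tau>_def[symmetric] by blast
qed

lemma isolating_specialization_prod_minus_1:
  assumes "S\<^sub>0 \<in> finite_nonempty_sets"
  shows "isolating_specialization (\<lambda>S. (\<Prod>j\<in>S. pvar j) - 1) S\<^sub>0 (\<lambda>j. if j \<in> S\<^sub>0 then [:0, 1:] else [:2:]) 1"
proof -
  define \<tau> :: "nat \<Rightarrow> rat poly" where "\<tau> j = (if j \<in> S\<^sub>0 then [:0, 1:] else [:2:])" for j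
  have eval: "mpoly_eval (\<lambda>c. [:c:]) \<tau> ((\<Prod>j\<in>S. pvar j) - 1) = (\<Prod>j\<in>S. \<tau> j) - 1" for S
    by (simp add: const_poly.mpoly_eval_diff const_poly.mpoly_eval_prod const_poly.mpoly_eval_pvar
        const_poly.mpoly_eval_one)
  have separated: "poly ((\<Prod>j\<in>S. \<tau> j) - 1) 1 \<noteq> 0" if "S \<in> finite_nonempty_sets" "\<not> S \<subseteq> S\<^sub>0" for S
  proof -
    from that obtain j where j: "j \<in> S" "j \<notin> S\<^sub>0" and "finite S"
      by (auto simp: finite_nonempty_sets_def)
    then have "(\<Prod>i\<in>S. poly (\<tau> i) 1) = poly (\<tau> j) 1 * (\<Prod>i\<in>S - {j}. poly (\<tau> i) 1)"
      by (simp add: prod.remove)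
    also have "poly (\<tau> j) 1 = 2"
      using j by (simp add: \<tau>_def)
    finally have "(\<Prod>i\<in>S. poly (\<tau> i) 1) = 2 * (\<Prod>i\<in>S - {j}. poly (\<tau> i) 1)" .
    moreover have "(1::rat) \<le> (\<Prod>i\<in>S - {j}. poly (\<tau> i) 1)"
      by (rule prod_ge_1) (simp add: \<tau>_def)
    ultimately show ?thesis by (simp add: poly_prod)
  qed
  define k where "k = card S\<^sub>0"
  define Q :: "rat poly" where "Q = (\<Sum>i<k. [:0, 1:] ^ i)"
  have "(\<Prod>j\<in>S\<^sub>0. \<tau> j) = [:0, 1:] ^ k"
    by (simp add: \<tau>_def k_def)
  moreover have "[:0, 1::rat:] ^ k - 1 = ([:0, 1:] - 1) * Q"
    using power_diff_sumr2[of "[:0, 1::rat:]" k 1] by (simp add: Q_def)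
  moreover have "[:0, 1::rat:] - 1 = [:-1, 1:]"
    by (simp add: one_pCons)
  ultimately have factor: "(\<Prod>j\<in>S\<^sub>0. \<tau> j) - 1 = [:-1, 1:] * Q"
    by simp
  have Q: "poly Q 1 \<noteq> 0"
    using assms by (simp add: Q_def poly_sum k_def finite_nonempty_sets_def)
  then have nonzero: "[:-1, 1:] * Q \<noteq> 0"
    by (intro no_zero_divisors) auto
  have "order 1 ([:-1, 1:] * Q) = order 1 [:-1, 1::rat:] + order 1 Q"
    using nonzero by (rule order_mult)
  also have "\<dots> = 1"
    using order_power_n_n[of "1::rat" 1] order_0I[OF Q] by simp
  finally show ?thesis
    using nonzero separated unfolding isolating_specialization_def eval \<tau>_def[symmetric] factor by blast
qed

lemma isolated_exponents_eq:
  assumes "finite K" "K \<subseteq> finite_nonempty_sets" "S\<^sub>0 \<in> K"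
    and minimal: "\<And>S. S \<in> K \<Longrightarrow> S \<subseteq> S\<^sub>0 \<Longrightarrow> S = S\<^sub>0"
    and isolating: "isolating_specialization Lp S\<^sub>0 \<tau> r"
    and eq: "(\<Prod>S\<in>K. Lp S ^ e S) = (\<Prod>S\<in>K. Lp S ^ f S)"
  shows "e S\<^sub>0 = f S\<^sub>0"
proof -
  let ?h = "mpoly_eval (\<lambda>c. [:c:]) \<tau>"
  have root: "poly (?h (Lp S)) r \<noteq> 0" if "S \<in> K" "S \<noteq> S\<^sub>0" for S
    using isolating minimal that assms(2) unfolding isolating_specialization_def by blast
  have nonzero: "?h (Lp S) \<noteq> 0" if "S \<in> K" for S
    using isolating root[OF that] unfolding isolating_specialization_def by (cases "S = S\<^sub>0") auto
  have order: "order r (?h (Lp S)) = (if S = S\<^sub>0 then 1 else 0)" if "S \<in> K" for S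
  proof (cases "S = S\<^sub>0")
    case True
    with isolating show ?thesis by (simp add: isolating_specialization_def)
  next
    case False
    with root[OF that] show ?thesis by (simp add: order_0I)
  qed
  have "order r (?h (\<Prod>S\<in>K. Lp S ^ g S)) = g S\<^sub>0" for g
  proof -
    have "order r (?h (\<Prod>S\<in>K. Lp S ^ g S)) = (\<Sum>S\<in>K. order r (?h (Lp S) ^ g S))"
      unfolding const_poly.mpoly_eval_prod const_poly.mpoly_eval_power
      by (rule order_prod[OF assms(1)]) (use nonzero in simp)
    also have "\<dots> = (\<Sum>S\<in>K. if S = S\<^sub>0 then g S else 0)"
      by (rule sum.cong) (use nonzero order in \<open>auto simp: order_power\<close>)
    also have "\<dots> = g S\<^sub>0"
      using assms(1,3) by simp
    finally show ?thesis .
  qed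
  from this[of e] this[of f] eq show ?thesis by simp
qed

lemma ff_eval_eq_1_imp_prod_eq:
  assumes L: "\<And>S. L S = Fract (Lp S) 1" and H: "ff_eval L H = 1"
    and nonzero: "\<And>S. S \<in> Poly_Mapping.keys H \<Longrightarrow> Lp S \<noteq> 0"
  shows "(\<Prod>S\<in>Poly_Mapping.keys H. Lp S ^ nat (Poly_Mapping.lookup H S))
    = (\<Prod>S\<in>Poly_Mapping.keys H. Lp S ^ nat (- Poly_Mapping.lookup H S))"
    (is "?P = ?N")
proof -
  have "ff_eval L H = Fract ?P 1 / Fract ?N 1"
    unfolding ff_eval_def power_int_eq_power_divide prod_dividef
    by (simp add: L Fract_prod_1 Fract_power_1)
  moreover have "Fract ?N 1 \<noteq> 0"
    using nonzero by (simp add: Fract_1_eq_0_iff)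
  ultimately have "Fract ?P 1 = Fract ?N 1"
    using H by (metis divide_eq_1_iff)
  then show ?thesis by (simp add: eq_fract)
qed

lemma inj_on_ff_eval:
  assumes L: "\<And>S. L S = Fract (Lp S) 1"
    and nonzero: "\<And>S. S \<in> finite_nonempty_sets \<Longrightarrow> Lp S \<noteq> 0"
    and isolating: "\<And>S\<^sub>0. S\<^sub>0 \<in> finite_nonempty_sets \<Longrightarrow> \<exists>\<tau> r. isolating_specialization Lp S\<^sub>0 \<tau> r"
  shows "inj_on (ff_eval L) {F. Poly_Mapping.keys F \<subseteq> finite_nonempty_sets}"
proof (rule inj_onI, rule ccontr)
  fix F G
  assume F: "F \<in> {F. Poly_Mapping.keys F \<subseteq> finite_nonempty_sets}"
    and G: "G \<in> {F. Poly_Mapping.keys F \<subseteq> finite_nonempty_sets}"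
    and eq: "ff_eval L F = ff_eval L G" and "F \<noteq> G"
  define H where "H = F - G"
  have L_nonzero: "L S \<noteq> 0" if "S \<in> finite_nonempty_sets" for S
    using nonzero[OF that] by (simp add: L Fract_1_eq_0_iff)
  have keys: "Poly_Mapping.keys H \<subseteq> finite_nonempty_sets"
    using keys_diff[of F G] F G unfolding H_def by blast
  have "ff_eval L G \<noteq> 0"
    by (rule ff_eval_nonzero) (use G L_nonzero in blast)
  moreover have "ff_eval L H = ff_eval L F / ff_eval L G"
    unfolding H_def by (rule ff_eval_diff) (use F G L_nonzero in blast)
  ultimately have "ff_eval L H = 1"
    by (simp add: eq)
  then have prod_eq: "(\<Prod>S\<in>Poly_Mapping.keys H. Lp S ^ nat (Poly_Mapping.lookup H S))
      = (\<Prod>S\<in>Poly_Mapping.keys H. Lp S ^ nat (- Poly_Mapping.lookup H S))"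
    by (rule ff_eval_eq_1_imp_prod_eq[OF L]) (use keys nonzero in blast)
  have "Poly_Mapping.keys H \<noteq> {}"
    using \<open>F \<noteq> G\<close> by (simp add: H_def)
  then obtain S\<^sub>0 where S\<^sub>0: "S\<^sub>0 \<in> Poly_Mapping.keys H"
    and "\<forall>S\<in>Poly_Mapping.keys H. S \<subseteq> S\<^sub>0 \<longrightarrow> S\<^sub>0 = S"
    using finite_has_minimal[OF finite_keys] by blast
  then have minimal: "\<And>S. S \<in> Poly_Mapping.keys H \<Longrightarrow> S \<subseteq> S\<^sub>0 \<Longrightarrow> S = S\<^sub>0"
    by blast
  from S\<^sub>0 keys obtain \<tau> r where isolating_S\<^sub>0: "isolating_specialization Lp S\<^sub>0 \<tau> r"
    using isolating by blast
  have "nat (Poly_Mapping.lookup H S\<^sub>0) = nat (- Poly_Mapping.lookup H S\<^sub>0)"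
    using isolated_exponents_eq[OF finite_keys keys S\<^sub>0 minimal isolating_S\<^sub>0 prod_eq] .
  then have "Poly_Mapping.lookup H S\<^sub>0 = 0" by simp
  with S\<^sub>0 show False by (simp add: in_keys_iff)
qed

theorem inj_on_phi0: "inj_on phi0 (FF n)"
  unfolding phi0_eq_ff_eval
  by (rule inj_on_subset[OF inj_on_ff_eval[OF phi0_symbol_Fract sum_pvar_nonzero]])
    (use isolating_specialization_sum keys_FF_finite_nonempty in blast)+

theorem inj_on_phi1: "inj_on phi1 (FF n)"
  unfolding phi1_eq_ff_eval
  by (rule inj_on_subset[OF inj_on_ff_eval[OF phi1_symbol_Fract prod_pvar_minus_1_nonzero]])
    (use isolating_specialization_prod_minus_1 keys_FF_finite_nonempty in blast)+

theorem mainTheorem1: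
  shows "is_ns_set_operad FF ff_comp ff_unit
    \<and> is_operad_morphism FF ff_comp ff_unit Mould mould0_comp (inverse (u 1)) phi0
    \<and> (\<forall>n\<ge>1. inj_on phi0 (FF n))
    \<and> is_operad_morphism FF ff_comp ff_unit Mould mould1_comp (inverse (u 1 - 1)) phi1
    \<and> (\<forall>n\<ge>1. inj_on phi1 (FF n))"
  using ns_set_operad_FF operad_morphism_phi0 operad_morphism_phi1 inj_on_phi0 inj_on_phi1 by blast

end
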